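(* Consider the following two-bidder auction. A single good has common value $v$ with CDF $F_v$, density $f_v$, support $\mathbb{R}_+$ and finite mean. Assume $\mathbb{E}[v]>L\ge 0$ and let $\underline v$ in the support of $F_v$ satisfy $L=\mathbb{E}[\tilde v\mid\tilde v<\underline v]$ ($\tilde v\sim F_v$). Alice submits a bid knowing only $F_v$; then $v$ is realized and Bob, observing $v$ but not Alice's bid, submits a bid. The highest bid wins and pays its bid (payoff $v$ minus bid) unless it is strictly below $L$, in which case the good is unsold. If the bids tie, Bob wins; if Bob's bid equals $L$ he can win; a winning bid of Alice equal exactly to $L$ results in no sale. Define $$\beta_L(v)=\begin{cases}\mathbb{E}[\tilde v\mid \tilde v<v] & v\ge \underline v,\\ L & L<v<\underline v,\\ 0 & v\le L.\end{cases}$$ Suppose Alice draws $v'\sim F_v$ independently of $v$ and bids $\beta_L(v')$. Then Bob's best response, upon observing $v$, is to bid $\beta_L(v)$.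
   Context: Bidders are risk neutral. *)

theory Defs
  imports "HOL-Probability.Probability"
begin

definition cdf :: "(real \<Rightarrow> real) \<Rightarrow> real \<Rightarrow> real" where
  "cdf f x = (LINT t:{..<x}|lborel. f t)"

text \<open>Conditional mean E[v | v < x]; by the convention x/0 = 0 it is 0 when F(x) = 0.\<close>
definition condmean :: "(real \<Rightarrow> real) \<Rightarrow> real \<Rightarrow> real" where
  "condmean f x = (LINT t:{..<x}|lborel. t * f t) / cdf f x"

definition betaL :: "(real \<Rightarrow> real) \<Rightarrow> real \<Rightarrow> real \<Rightarrow> real \<Rightarrow> real" where
  "betaL f L vl v = (if vl \<le> v then condmean f v else if L < v then L else 0)"

definition bob_payoff :: "real \<Rightarrow> real \<Rightarrow> real \<Rightarrow> real \<Rightarrow> real" where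
  "bob_payoff L v a b = (if a \<le> b \<and> L \<le> b then v - b else 0)"

definition bob_expected :: "(real \<Rightarrow> real) \<Rightarrow> real \<Rightarrow> real \<Rightarrow> real \<Rightarrow> real \<Rightarrow> real" where
  "bob_expected f L vl v b = (LINT v'|lborel. f v' * bob_payoff L v (betaL f L vl v') b)"

end

theory Submission imports Defs begin

text \<open>
  Alice's strategy \<open>\<beta>\<close> is monotone, so a bid \<open>b \<ge> L\<close> wins exactly against the down-set
  \<open>{t. \<beta> t \<le> b}\<close> of her types. The surplus \<open>surplus f v x = (v - E[v' | v' < x]) F(x)\<close>
  that Bob would get by beating exactly the types below \<open>x\<close> at price \<open>E[v' | v' < x]\<close> increases
  in \<open>x\<close> up to \<open>v\<close> and decreases afterwards. If \<open>\<beta> t \<le> b\<close> then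
  \<open>E[v' | v' < max t vl] = max (\<beta> t) L \<le> b\<close>, hence \<open>(v - b) F(t)\<close> is at most
  \<open>surplus f v (max t vl) \<le> surplus f v (max v vl)\<close>; passing to the supremum over the down-set,
  no bid earns more than \<open>max 0 (surplus f v (max v vl))\<close>. The bid \<open>\<beta> v\<close> earns this much,
  as it beats every type below \<open>max v vl\<close>.
\<close>

lemma down_closed_real_cases:
  fixes S :: "real set"
  assumes down: "\<And>x y. x \<in> S \<Longrightarrow> y \<le> x \<Longrightarrow> y \<in> S"
  obtains "S = {}" | "S = UNIV" | x where "S = {..x}" | x where "S = {..<x}"
proof (cases "S = {}")
  case nonempty: False
  show ?thesis
  proof (cases "bdd_above S")
    case True
    have below_Sup: "t \<in> S" if "t < Sup S" for t
      using less_cSup_iff[OF nonempty True] that down by (auto intro: less_imp_le)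
    have "S \<subseteq> {..Sup S}"
      using cSup_upper[OF _ True] by auto
    then have "S = {..Sup S} \<or> S = {..<Sup S}"
      using below_Sup by (cases "Sup S \<in> S") (auto simp: less_le)
    then show ?thesis using that by blast
  next
    case False
    have "t \<in> S" for t
    proof -
      obtain s where "s \<in> S" "t < s"
        using False by (auto simp: bdd_above_def not_le)
      then show ?thesis using down by auto
    qed
    then show ?thesis using that by blast
  qed
qed simp

lemma (in real_distribution) measure_down_closed_le:
  assumes down: "\<And>x y. x \<in> S \<Longrightarrow> y \<le> x \<Longrightarrow> y \<in> S"
    and "0 \<le> B" and bound: "\<And>t. t \<in> S \<Longrightarrow> measure M {..t} \<le> B"
  shows "measure M S \<le> B"
proof (rule down_closed_real_cases[OF down])
  assume "S = {}"
  then show ?thesis using \<open>0 \<le> B\<close> by simp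
next
  assume S: "S = UNIV"
  have "1 \<le> B"
    by (rule tendsto_upperbound[OF cdf_lim_at_top_prob])
       (use S bound in \<open>auto simp: cdf_def2\<close>)
  then show ?thesis using S prob_space by simp
next
  fix x assume "S = {..x}"
  then show ?thesis using bound by simp
next
  fix x assume S: "S = {..<x}"
  have "eventually (\<lambda>t. Distribution_Functions.cdf M t \<le> B) (at_left x)"
    using eventually_at_left_real[of "x - 1" x] S bound
    by (auto simp: cdf_def2 elim: eventually_mono)
  with cdf_at_left have "measure M {..<x} \<le> B"
    by (rule tendsto_upperbound) simp
  then show ?thesis using S by simp
qed

definition partial_mean :: "(real \<Rightarrow> real) \<Rightarrow> real \<Rightarrow> real" where
  "partial_mean f x = (LINT t:{..<x}|lborel. t * f t)"

definition surplus :: "(real \<Rightarrow> real) \<Rightarrow> real \<Rightarrow> real \<Rightarrow> real" where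
  "surplus f v x = (LINT t:{..<x}|lborel. (v - t) * f t)"

definition value_measure :: "(real \<Rightarrow> real) \<Rightarrow> real measure" where
  "value_measure f = density lborel (\<lambda>t. ennreal (f t))"

locale value_density =
  fixes f :: "real \<Rightarrow> real"
  assumes borel_measurable_f [measurable]: "f \<in> borel_measurable borel"
    and f_nonneg: "\<And>t. 0 \<le> f t"
    and f_negative: "\<And>t. t < 0 \<Longrightarrow> f t = 0"
    and integrable_f: "integrable lborel f"
    and integral_f: "(LINT t|lborel. f t) = 1"
    and integrable_first_moment: "integrable lborel (\<lambda>t. t * f t)"
begin

lemma set_integrable_f: "A \<in> sets borel \<Longrightarrow> set_integrable lborel A f"
  unfolding set_integrable_def using integrable_mult_indicator[OF _ integrable_f] by simp

lemma set_integrable_first_moment: "A \<in> sets borel \<Longrightarrow> set_integrable lborel A (\<lambda>t. t * f t)"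
  unfolding set_integrable_def using integrable_mult_indicator[OF _ integrable_first_moment] by simp

lemma set_integrable_surplus: "A \<in> sets borel \<Longrightarrow> set_integrable lborel A (\<lambda>t. (v - t) * f t)"
  using set_integrable_f set_integrable_first_moment by (simp add: left_diff_distrib)

lemma surplus_eq: "surplus f v x = v * cdf f x - partial_mean f x"
  unfolding surplus_def cdf_def partial_mean_def left_diff_distrib
  by (simp add: set_integrable_f set_integrable_first_moment)

lemma surplus_diff:
  assumes "x \<le> y"
  shows "surplus f v y - surplus f v x = (LINT t:{x..<y}|lborel. (v - t) * f t)"
proof -
  have "{..<y} = {..<x} \<union> {x..<y}"
    using assms by auto
  then show ?thesis
    unfolding surplus_def by (simp add: set_integral_Un set_integrable_surplus ivl_disj_int)
qed

lemma surplus_mono: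
  assumes "x \<le> y" "y \<le> v"
  shows "surplus f v x \<le> surplus f v y"
proof -
  have "0 \<le> (LINT t:{x..<y}|lborel. (v - t) * f t)"
    unfolding set_lebesgue_integral_def using assms f_nonneg
    by (intro Bochner_Integration.integral_nonneg) (auto split: split_indicator)
  then show ?thesis using surplus_diff[OF \<open>x \<le> y\<close>, of v] by simp
qed

lemma surplus_antimono:
  assumes "v \<le> x" "x \<le> y"
  shows "surplus f v y \<le> surplus f v x"
proof -
  have "(v - t) * f t \<le> 0" if "x \<le> t" for t
    using assms that f_nonneg[of t] by (intro mult_nonpos_nonneg) auto
  then have "(LINT t:{x..<y}|lborel. (v - t) * f t) \<le> 0"
    using set_integral_mono[OF set_integrable_surplus, of "{x..<y}" "\<lambda>_. 0" v]
    by (simp add: set_integrable_def)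
  then show ?thesis using surplus_diff[OF \<open>x \<le> y\<close>, of v] by simp
qed

lemma surplus_nonneg: "x \<le> v \<Longrightarrow> 0 \<le> surplus f v x"
  unfolding surplus_def set_lebesgue_integral_def using f_nonneg
  by (intro Bochner_Integration.integral_nonneg) (auto split: split_indicator)

lemma surplus_le_peak: "w \<le> x \<Longrightarrow> surplus f v x \<le> surplus f v (max v w)"
  using surplus_mono[of x v v] surplus_antimono[of v "max v w" x] by (cases "x \<le> v") auto

lemma condmean_eq: "condmean f x = partial_mean f x / cdf f x"
  unfolding condmean_def partial_mean_def ..

lemma real_distribution_value_measure: "real_distribution (value_measure f)"
proof -
  have "emeasure (value_measure f) UNIV = ennreal (LINT t|lborel. f t)"
    unfolding value_measure_def using integrable_f f_nonneg
    by (simp add: emeasure_density nn_integral_eq_integral)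
  then have "prob_space (value_measure f)"
    using integral_f by (intro prob_spaceI) (simp add: value_measure_def)
  then show ?thesis
    by (simp add: real_distribution_def real_distribution_axioms_def value_measure_def)
qed

lemma measure_value_measure:
  assumes "A \<in> sets borel"
  shows "measure (value_measure f) A = (LINT t:A|lborel. f t)"
proof -
  have "emeasure (value_measure f) A = (\<integral>\<^sup>+ t. ennreal (indicator A t * f t) \<partial>lborel)"
    unfolding value_measure_def using assms
    by (simp add: emeasure_density) (intro nn_integral_cong, simp split: split_indicator)
  also have "\<dots> = ennreal (LINT t:A|lborel. f t)"
    using set_integrable_f[OF assms] f_nonneg
    unfolding set_lebesgue_integral_def set_integrable_def real_scaleR_def
    by (intro nn_integral_eq_integral) auto
  finally show ?thesis
    unfolding measure_def using assms set_integrable_f f_nonneg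
    by (simp add: set_lebesgue_integral_def Bochner_Integration.integral_nonneg)
qed

lemma cdf_eq_measure: "cdf f x = measure (value_measure f) {..<x}"
  unfolding cdf_def by (simp add: measure_value_measure)

lemma measure_value_measure_atMost: "measure (value_measure f) {..x} = cdf f x"
proof -
  have "AE t in value_measure f. t \<in> {..x} \<longleftrightarrow> t \<in> {..<x}"
    unfolding value_measure_def using AE_lborel_singleton[of x]
    by (subst AE_density) (auto elim: eventually_mono)
  then show ?thesis
    unfolding cdf_eq_measure by (intro measure_eq_AE) (auto simp: value_measure_def)
qed

lemma cdf_nonneg: "0 \<le> cdf f x"
  unfolding cdf_eq_measure by simp

lemma cdf_mono:
  assumes "x \<le> y"
  shows "cdf f x \<le> cdf f y"
proof -
  interpret P: real_distribution "value_measure f"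
    by (rule real_distribution_value_measure)
  show ?thesis
    unfolding cdf_eq_measure using assms by (intro P.finite_measure_mono) auto
qed

lemma partial_mean_nonneg: "0 \<le> partial_mean f x"
proof -
  have "0 \<le> t * f t" for t
    using f_nonneg[of t] f_negative[of t] by (cases "t < 0") auto
  then show ?thesis
    unfolding partial_mean_def set_lebesgue_integral_def
    by (intro Bochner_Integration.integral_nonneg) (auto split: split_indicator)
qed

lemma condmean_mult_cdf: "condmean f x * cdf f x = partial_mean f x"
proof (cases "cdf f x = 0")
  case True
  then have "partial_mean f x \<le> 0"
    using surplus_nonneg[of x x] by (simp add: surplus_eq)
  then show ?thesis
    using True partial_mean_nonneg[of x] by simp
qed (simp add: condmean_eq)

lemma surplus_eq_condmean: "surplus f v x = (v - condmean f x) * cdf f x"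
  by (simp add: surplus_eq left_diff_distrib condmean_mult_cdf)

lemma condmean_nonneg: "0 \<le> condmean f x"
  unfolding condmean_eq using partial_mean_nonneg cdf_nonneg by simp

lemma condmean_le_self:
  assumes "0 \<le> x"
  shows "condmean f x \<le> x"
proof (cases "cdf f x = 0")
  case False
  then show ?thesis
    using surplus_nonneg[of x x] cdf_nonneg[of x]
    by (simp add: surplus_eq_condmean zero_le_mult_iff)
qed (simp add: condmean_eq assms)

lemma mono_condmean: "mono (condmean f)"
proof
  fix x y :: real
  assume "x \<le> y"
  show "condmean f x \<le> condmean f y"
  proof (cases "cdf f x = 0")
    case True
    then show ?thesis using condmean_nonneg[of y] by (simp add: condmean_eq)
  next
    case False
    then have Fx: "0 < cdf f x" and Fxy: "cdf f x \<le> cdf f y"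
      using cdf_nonneg[of x] cdf_mono[OF \<open>x \<le> y\<close>] by auto
    have "0 \<le> x - condmean f x"
      using surplus_nonneg[of x x] Fx by (simp add: surplus_eq_condmean zero_le_mult_iff)
    have "(x - condmean f y) * cdf f y \<le> (x - condmean f x) * cdf f x"
      using surplus_antimono[of x x y] \<open>x \<le> y\<close> by (simp add: surplus_eq_condmean)
    also have "\<dots> \<le> (x - condmean f x) * cdf f y"
      using Fxy \<open>0 \<le> x - condmean f x\<close> by (rule mult_left_mono)
    finally show ?thesis
      using Fx Fxy by (simp add: mult_le_cancel_right)
  qed
qed

end

locale reserve_price_auction = value_density +
  fixes L vl :: real
  assumes L_nonneg: "0 \<le> L"
    and L_eq_condmean: "L = condmean f vl"
begin

abbreviation \<beta> :: "real \<Rightarrow> real" where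
  "\<beta> \<equiv> betaL f L vl"

lemma L_le_condmean: "vl \<le> t \<Longrightarrow> L \<le> condmean f t"
  using mono_condmean L_eq_condmean by (auto dest: monoD)

lemma mono_betaL: "mono \<beta>"
proof
  fix s t :: real
  assume "s \<le> t"
  then show "\<beta> s \<le> \<beta> t"
    using L_nonneg L_le_condmean[of t] monoD[OF mono_condmean \<open>s \<le> t\<close>]
    by (auto simp: betaL_def)
qed

lemma borel_measurable_betaL [measurable]: "\<beta> \<in> borel_measurable borel"
  by (rule borel_measurable_mono[OF mono_betaL])

lemma betaL_le_self: "0 \<le> v \<Longrightarrow> \<beta> v \<le> v"
  using condmean_le_self[of v] by (auto simp: betaL_def)

lemma condmean_max_threshold: "condmean f (max t vl) = max (\<beta> t) L"
  using L_nonneg L_le_condmean[of t] L_eq_condmean by (auto simp: betaL_def max_def)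

lemma bob_expected_eq:
  "bob_expected f L vl v b =
    (if L \<le> b then (v - b) * measure (value_measure f) {t. \<beta> t \<le> b} else 0)"
proof (cases "L \<le> b")
  case True
  have "bob_expected f L vl v b = (LINT t:{t. \<beta> t \<le> b}|lborel. (v - b) * f t)"
    unfolding bob_expected_def bob_payoff_def set_lebesgue_integral_def using True
    by (intro Bochner_Integration.integral_cong) (auto split: split_indicator)
  then show ?thesis
    using True by (simp add: measure_value_measure)
qed (simp add: bob_expected_def bob_payoff_def)

lemma bob_expected_le: "bob_expected f L vl v b \<le> max 0 (surplus f v (max v vl))"
proof -
  interpret P: real_distribution "value_measure f"
    by (rule real_distribution_value_measure)
  consider "b < L" | "v \<le> b" | "L \<le> b" "b < v"
    by linarith
  then show ?thesis
  proof cases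
    case 1
    then show ?thesis by (simp add: bob_expected_eq)
  next
    case 2
    then have "(v - b) * measure (value_measure f) {t. \<beta> t \<le> b} \<le> 0"
      by (intro mult_nonpos_nonneg) auto
    then show ?thesis by (simp add: bob_expected_eq le_max_iff_disj)
  next
    case 3
    let ?T = "max 0 (surplus f v (max v vl))"
    have bound: "measure (value_measure f) {..t} \<le> ?T / (v - b)" if "\<beta> t \<le> b" for t
    proof -
      have "(v - b) * cdf f t \<le> (v - b) * cdf f (max t vl)"
        using 3 cdf_mono[of t "max t vl"] by simp
      also have "\<dots> \<le> (v - condmean f (max t vl)) * cdf f (max t vl)"
        using that 3 cdf_nonneg by (intro mult_right_mono) (auto simp: condmean_max_threshold)
      also have "\<dots> \<le> surplus f v (max v vl)"
        using surplus_le_peak[of vl "max t vl" v] by (simp add: surplus_eq_condmean)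
      finally show ?thesis
        using 3 by (simp add: measure_value_measure_atMost pos_le_divide_eq mult.commute)
    qed
    have "measure (value_measure f) {t. \<beta> t \<le> b} \<le> ?T / (v - b)"
    proof (rule P.measure_down_closed_le)
      show "y \<in> {t. \<beta> t \<le> b}" if "x \<in> {t. \<beta> t \<le> b}" "y \<le> x" for x y
        using that monoD[OF mono_betaL, of y x] by simp
      show "0 \<le> ?T / (v - b)"
        using 3 by simp
    qed (use bound in simp)
    then show ?thesis
      using 3 by (simp add: bob_expected_eq pos_le_divide_eq mult.commute)
  qed
qed

lemma bob_expected_betaL_ge:
  assumes "0 \<le> v"
  shows "max 0 (surplus f v (max v vl)) \<le> bob_expected f L vl v (\<beta> v)"
proof (cases "L \<le> \<beta> v")
  case True
  interpret P: real_distribution "value_measure f"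
    by (rule real_distribution_value_measure)
  have "\<beta> t \<le> \<beta> v" if "t < max v vl" for t
  proof -
    have "\<beta> t \<le> condmean f (max t vl)"
      by (simp add: condmean_max_threshold)
    also have "\<dots> \<le> condmean f (max v vl)"
      using that by (intro monoD[OF mono_condmean]) simp
    finally show ?thesis
      using True by (simp add: condmean_max_threshold)
  qed
  then have "cdf f (max v vl) \<le> measure (value_measure f) {t. \<beta> t \<le> \<beta> v}"
    unfolding cdf_eq_measure by (intro P.finite_measure_mono) auto
  then have "surplus f v (max v vl) \<le> (v - \<beta> v) * measure (value_measure f) {t. \<beta> t \<le> \<beta> v}"
    using True betaL_le_self[OF assms]
    by (simp add: surplus_eq_condmean condmean_max_threshold max_absorb1 mult_left_mono)
  then show ?thesis
    using True betaL_le_self[OF assms] by (simp add: bob_expected_eq)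
next
  case False
  then have "v \<le> L"
    using L_le_condmean[of v] by (auto simp: betaL_def split: if_splits)
  then have "surplus f v (max v vl) \<le> 0"
    using False cdf_nonneg by (simp add: surplus_eq_condmean condmean_max_threshold mult_nonpos_nonneg)
  then show ?thesis
    using False by (simp add: bob_expected_eq)
qed

end

theorem lemma4:
  fixes f :: "real \<Rightarrow> real" and L vl :: real
  assumes f_meas: "f \<in> borel_measurable borel"
    and f_nonneg: "\<And>t. 0 \<le> f t"
    and f_neg: "\<And>t. t < 0 \<Longrightarrow> f t = 0"
    and f_int: "integrable lborel f"
    and f_total: "(LINT t|lborel. f t) = 1"
    and support: "\<And>a b. 0 \<le> a \<Longrightarrow> a < b \<Longrightarrow> cdf f a < cdf f b"
    and finite_mean: "integrable lborel (\<lambda>t. t * f t)"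
    and mean_gt: "(LINT t|lborel. t * f t) > L"
    and L_nonneg: "0 \<le> L"
    and vl_supp: "0 \<le> vl"
    and vl_def: "L = condmean f vl"
  shows "\<forall>v\<ge>0. \<forall>b. bob_expected f L vl v b \<le> bob_expected f L vl v (betaL f L vl v)"
proof -
  interpret reserve_price_auction f L vl
    by unfold_locales (fact f_meas f_nonneg f_neg f_int f_total finite_mean L_nonneg vl_def)+
  show ?thesis
    using bob_expected_le bob_expected_betaL_ge by (blast intro: order_trans)
qed

end
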